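(* Let $\gamma>0$ and $0<\alpha<1$. For $j\in\mathbb{Z}_{\ge0}$ let $F_j={}_2F_1(\gamma,j\gamma;1+j\gamma;\alpha)$, and define $$g(x)=\sum_{l=0}^{\infty}\frac{(-x)^l}{l!}\,\frac{1}{\prod_{j=0}^{l}F_j}.$$ Then $g$ is an entire function of $x$.
   Context: ${}_2F_1$ denotes the Gauss hypergeometric function. Note $F_0=1$. *)

theory Defs
  imports "HOL-Complex_Analysis.Complex_Analysis"
begin

definition hyp2F1 :: "real \<Rightarrow> real \<Rightarrow> real \<Rightarrow> real \<Rightarrow> real" where
  "hyp2F1 a b c z =
     (\<Sum>n. pochhammer a n * pochhammer b n / (pochhammer c n * fact n) * z ^ n)"

definition Fj :: "real \<Rightarrow> real \<Rightarrow> nat \<Rightarrow> real" where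
  "Fj \<gamma> \<alpha> j = hyp2F1 \<gamma> (real j * \<gamma>) (1 + real j * \<gamma>) \<alpha>"

definition g_term :: "real \<Rightarrow> real \<Rightarrow> complex \<Rightarrow> nat \<Rightarrow> complex" where
  "g_term \<gamma> \<alpha> x l =
     (-x) ^ l / fact l / complex_of_real (\<Prod>j\<in>{0..l}. Fj \<gamma> \<alpha> j)"

definition g_fun :: "real \<Rightarrow> real \<Rightarrow> complex \<Rightarrow> complex" where
  "g_fun \<gamma> \<alpha> x = (\<Sum>l. g_term \<gamma> \<alpha> x l)"

end

theory Submission
  imports Defs
begin

text \<open>For \<open>\<gamma> > 0\<close> and \<open>0 < \<alpha> < 1\<close> every \<open>F\<^sub>j\<close> is a convergent series of nonnegative terms
  with constant term 1, hence \<open>F\<^sub>j \<ge> 1\<close>. So the \<open>l\<close>-th coefficient of \<open>g\<close> is bounded by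
  \<open>1 / l!\<close>, and \<open>g\<close> is dominated by the exponential series: it converges everywhere and
  a power series converging on all of \<open>\<complex>\<close> is entire.\<close>

definition hyp2F1_coeff :: "real \<Rightarrow> real \<Rightarrow> real \<Rightarrow> nat \<Rightarrow> real" where
  "hyp2F1_coeff a b c n = pochhammer a n * pochhammer b n / (pochhammer c n * fact n)"

lemma hyp2F1_eq_suminf_coeff: "hyp2F1 a b c z = (\<Sum>n. hyp2F1_coeff a b c n * z ^ n)"
  unfolding hyp2F1_def hyp2F1_coeff_def ..

lemma pochhammer_nonneg_of_nonneg: "0 \<le> (x::real) \<Longrightarrow> 0 \<le> pochhammer x n"
  by (induction n) (auto simp: pochhammer_Suc)

lemma hyp2F1_coeff_nonneg:
  "0 \<le> a \<Longrightarrow> 0 \<le> b \<Longrightarrow> 0 < c \<Longrightarrow> 0 \<le> hyp2F1_coeff a b c n"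
  unfolding hyp2F1_coeff_def
  by (intro divide_nonneg_pos mult_nonneg_nonneg mult_pos_pos pochhammer_nonneg_of_nonneg
      pochhammer_pos) auto

lemma hyp2F1_coeff_Suc:
  assumes "0 < c"
  shows "hyp2F1_coeff a b c (Suc n) =
           hyp2F1_coeff a b c n * ((a + n) * (b + n) / ((c + n) * (n + 1)))"
proof -
  have "pochhammer c n \<noteq> 0" "c + n \<noteq> 0"
    using pochhammer_pos[OF assms, of n] assms by auto
  then show ?thesis
    by (simp add: hyp2F1_coeff_def pochhammer_Suc field_simps)
qed

lemma summable_hyp2F1_series:
  assumes a: "0 \<le> a" and b: "0 \<le> b" "b \<le> c" and c: "0 < c" and z: "\<bar>z\<bar> < 1"
  shows "summable (\<lambda>n. hyp2F1_coeff a b c n * z ^ n)"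
proof (rule summable_ratio_test)
  define q where "q = (1 + \<bar>z\<bar>) / 2"
  show "q < 1"
    using z by (simp add: q_def)
  fix n :: nat
  assume "nat \<lceil>2 * a / (1 - \<bar>z\<bar>)\<rceil> \<le> n"
  then have "2 * a \<le> n * (1 - \<bar>z\<bar>)"
    using z by (simp add: field_simps)
  moreover have "a * \<bar>z\<bar> \<le> a"
    using a z by (simp add: mult_left_le)
  ultimately have "(a + n) * \<bar>z\<bar> \<le> q * (n + 1)"
    unfolding q_def by (simp add: algebra_simps)
  then have ratio_le: "(a + n) / (n + 1) * \<bar>z\<bar> \<le> q"
    by (simp add: field_simps)
  define r where "r = (a + n) * (b + n) / ((c + n) * (n + 1))"
  have "r = (a + n) / (n + 1) * ((b + n) / (c + n))"
    unfolding r_def by simp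
  also have "\<dots> \<le> (a + n) / (n + 1)"
    using a b c by (intro mult_left_le) auto
  finally have "r * \<bar>z\<bar> \<le> q"
    using ratio_le by (meson abs_ge_zero mult_right_mono order_trans)
  have "norm (hyp2F1_coeff a b c (Suc n) * z ^ Suc n)
      = r * \<bar>z\<bar> * \<bar>hyp2F1_coeff a b c n * z ^ n\<bar>"
    using a b c hyp2F1_coeff_nonneg[OF a b(1) c, of n]
    by (simp add: hyp2F1_coeff_Suc[OF c] r_def abs_mult power_abs)
  also have "\<dots> \<le> q * norm (hyp2F1_coeff a b c n * z ^ n)"
    using \<open>r * \<bar>z\<bar> \<le> q\<close> by (simp add: mult_right_mono)
  finally show "norm (hyp2F1_coeff a b c (Suc n) * z ^ Suc n)
      \<le> q * norm (hyp2F1_coeff a b c n * z ^ n)" .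
qed

lemma hyp2F1_ge_1:
  assumes "0 \<le> a" "0 \<le> b" "b \<le> c" "0 < c" "0 \<le> z" "z < 1"
  shows "1 \<le> hyp2F1 a b c z"
proof -
  have "(\<Sum>n\<in>{0}. hyp2F1_coeff a b c n * z ^ n) \<le> (\<Sum>n. hyp2F1_coeff a b c n * z ^ n)"
    using assms by (intro sum_le_suminf summable_hyp2F1_series mult_nonneg_nonneg
        hyp2F1_coeff_nonneg) auto
  then show ?thesis
    by (simp add: hyp2F1_eq_suminf_coeff hyp2F1_coeff_def)
qed

lemma Fj_ge_1: "0 \<le> \<gamma> \<Longrightarrow> 0 \<le> \<alpha> \<Longrightarrow> \<alpha> < 1 \<Longrightarrow> 1 \<le> Fj \<gamma> \<alpha> j"
  unfolding Fj_def by (rule hyp2F1_ge_1) (auto intro: add_pos_nonneg)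

lemma summable_powser_if_norm_coeff_le_inverse_fact:
  fixes c :: "nat \<Rightarrow> 'a::{real_normed_div_algebra, banach}"
  assumes "\<And>n. norm (c n) \<le> 1 / fact n"
  shows "summable (\<lambda>n. c n * z ^ n)"
proof (rule summable_comparison_test')
  show "summable (\<lambda>n. norm z ^ n / fact n)"
    using summable_exp[of "norm z"] by (simp add: field_simps)
  fix n
  have "norm (c n * z ^ n) \<le> 1 / fact n * norm z ^ n"
    unfolding norm_mult norm_power by (intro mult_right_mono assms) auto
  then show "norm (c n * z ^ n) \<le> norm z ^ n / fact n"
    by simp
qed

lemma holomorphic_on_UNIV_powser:
  fixes c :: "nat \<Rightarrow> complex"
  assumes "\<And>z. summable (\<lambda>n. c n * z ^ n)"
  shows "(\<lambda>z. \<Sum>n. c n * z ^ n) holomorphic_on UNIV"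
  unfolding holomorphic_on_def field_differentiable_def
  using termdiffs_strong_converges_everywhere[OF assms]
  by (blast intro: has_field_derivative_at_within)

theorem mainTheorem7:
  fixes \<gamma> \<alpha> :: real
  assumes "\<gamma> > 0" and "0 < \<alpha>" and "\<alpha> < 1"
  shows "(\<forall>x::complex. summable (g_term \<gamma> \<alpha> x)) \<and> g_fun \<gamma> \<alpha> holomorphic_on UNIV"
proof -
  define c :: "nat \<Rightarrow> complex" where
    "c l = (-1) ^ l / fact l / complex_of_real (\<Prod>j\<in>{0..l}. Fj \<gamma> \<alpha> j)" for l
  have g_term_eq: "g_term \<gamma> \<alpha> x = (\<lambda>l. c l * x ^ l)" for x
    unfolding fun_eq_iff g_term_def c_def power_minus[of x] by simp
  have "norm (c l) \<le> 1 / fact l" for l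
  proof -
    define P where "P = (\<Prod>j\<in>{0..l}. Fj \<gamma> \<alpha> j)"
    have "1 \<le> P"
      unfolding P_def using assms by (intro prod_ge_1 Fj_ge_1) auto
    moreover have "norm (c l) = 1 / fact l / P"
      using \<open>1 \<le> P\<close> unfolding c_def P_def[symmetric]
      by (simp add: norm_divide norm_power norm_mult)
    ultimately show ?thesis
      by (simp add: divide_le_eq)
  qed
  then have summable: "summable (\<lambda>l. c l * x ^ l)" for x
    by (rule summable_powser_if_norm_coeff_le_inverse_fact)
  show ?thesis
    unfolding g_fun_def g_term_eq
    using summable holomorphic_on_UNIV_powser[OF summable] by simp
qed

end
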